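(* Let $p\ge3$ be a prime, let $c_1,c_2\in(0,1/2]$, and let $D_1,D_2$ be probability distributions on $\mathbb{F}_p$ such that $D_i(x)\le1-c_i$ for all $x\in\mathbb{F}_p$ and $i=1,2$. Let $n_1,n_2$ be positive integers and let $b:\mathbb{F}_p^{n_1}\times\mathbb{F}_p^{n_2}\to\mathbb{F}_p$ be a bilinear form of rank $k$. Then for every $t\in\mathbb{F}_p^*$, \[|\mathrm{bias}_{t,(D_1,D_2)}b|\le 3\exp\!\Big(-\frac{c_1c_2\pi^2k}{2p^2\log(2ep/c_1)}\Big).\]
   Context: $\omega_p=\exp(2\pi i/p)$. $\mathrm{bias}_{t,(D_1,D_2)}b=\mathbb{E}_{x\sim D_1^{n_1},\,y\sim D_2^{n_2}}\omega_p^{t\,b(x,y)}$, where $D^n$ denotes the product distribution with independent coordinates distributed according to $D$. The rank of $b$ is the rank of its coefficient matrix. *)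

theory Defs
  imports "HOL-Analysis.Analysis" "Berlekamp_Zassenhaus.Finite_Field"
begin

text \<open>F_p is modelled as the type 'p mod_ring with 'p of class prime_card, so p = CARD('p).
 Vectors in F_p^n are 'p mod_ring ^ 'n for a finite index type 'n.\<close>

definition omega_pow :: "'p::prime_card mod_ring \<Rightarrow> complex" where
  "omega_pow a = cis (2 * pi * real_of_int (to_int_mod_ring a) / real CARD('p))"

definition bilin_form :: "'p::prime_card mod_ring ^ 'n2 ^ 'n1 \<Rightarrow>
    'p mod_ring ^ 'n1 \<Rightarrow> 'p mod_ring ^ 'n2 \<Rightarrow> 'p mod_ring" where
  "bilin_form A x y = (\<Sum>i\<in>UNIV. \<Sum>j\<in>UNIV. A $ i $ j * x $ i * y $ j)"

definition prod_dist :: "('p::prime_card mod_ring \<Rightarrow> real) \<Rightarrow> 'p mod_ring ^ 'n \<Rightarrow> real" where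
  "prod_dist D x = (\<Prod>i\<in>UNIV. D (x $ i))"

definition bias :: "'p::prime_card mod_ring \<Rightarrow> ('p mod_ring \<Rightarrow> real) \<Rightarrow> ('p mod_ring \<Rightarrow> real)
    \<Rightarrow> ('p mod_ring ^ 'n1 \<Rightarrow> 'p mod_ring ^ 'n2 \<Rightarrow> 'p mod_ring) \<Rightarrow> complex" where
  "bias t D1 D2 b = (\<Sum>x\<in>(UNIV :: ('p mod_ring ^ 'n1) set). \<Sum>y\<in>(UNIV :: ('p mod_ring ^ 'n2) set).
      complex_of_real (prod_dist D1 x * prod_dist D2 y) * omega_pow (t * b x y))"

definition is_distribution :: "('p::prime_card mod_ring \<Rightarrow> real) \<Rightarrow> bool" where
  "is_distribution D \<longleftrightarrow> (\<forall>a. 0 \<le> D a) \<and> (\<Sum>a\<in>UNIV. D a) = 1"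

end

theory Submission
  imports Defs
begin

text \<open>
  Since \<open>b(x, y) = \<langle>xA, y\<rangle>\<close>, summing over \<open>y\<close> first factorises the bias as
  \<open>E\<^sub>x \<Prod>\<^sub>j \<phi>(t (xA)\<^sub>j)\<close>, where \<open>\<phi>(\<sigma>) = E\<^bsub>a\<sim>D\<^sub>2\<^esub> \<omega>\<^bsup>\<sigma>a\<^esup>\<close> satisfies
  \<open>|\<phi>(\<sigma>)| \<le> \<rho> = sqrt (1 - c\<^sub>2 (1 - cos (2\<pi>/p)))\<close> for \<open>\<sigma> \<noteq> 0\<close>. Hence
  \<open>|bias| \<le> E\<^sub>x \<rho>\<^bsup>|xA|\<^esup>\<close> with \<open>|v|\<close> the Hamming weight, and by Jensen's inequality this is at most
  \<open>(E\<^sub>x u\<^bsup>|xA|\<^esup>)\<^bsup>1/s\<^esup>\<close> for any \<open>s \<ge> 1\<close> and \<open>u = \<rho>\<^sup>s\<close>. Every value of \<open>xA\<close> has probability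
  at most \<open>(1 - c\<^sub>1)\<^sup>k\<close>, and the weight enumerator of the \<open>k\<close>-dimensional row space satisfies
  \<open>\<Sum>\<^sub>v u\<^bsup>|v|\<^esup> \<le> (1 + (p - 1) u)\<^sup>k\<close>, so \<open>E\<^sub>x u\<^bsup>|xA|\<^esup> \<le> ((1 - c\<^sub>1)(1 + (p - 1) u))\<^sup>k\<close>.
  Choosing \<open>s\<close> with \<open>u = c\<^sub>1 / (5 (p - 1))\<close> and using \<open>1 - cos (2\<pi>/p) \<ge> 5\<pi>\<^sup>2 / (4p\<^sup>2)\<close> gives
  the bound, even without the factor 3.
\<close>

section \<open>The additive character and Fourier coefficients\<close>

lemma omega_pow_add:
  "omega_pow (a + b) = omega_pow a * omega_pow b" for a b :: "'p::prime_card mod_ring"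
proof -
  define P where "P = int CARD('p)"
  define q where "q = (to_int_mod_ring a + to_int_mod_ring b) div P"
  have "to_int_mod_ring (a + b) = (to_int_mod_ring a + to_int_mod_ring b) mod P"
    by (simp add: to_int_mod_ring_add P_def)
  then have sum_rep: "to_int_mod_ring (a + b) = to_int_mod_ring a + to_int_mod_ring b - P * q"
    unfolding q_def by (simp add: minus_div_mult_eq_mod [symmetric] mult.commute)
  have "omega_pow (a + b) = cis (2 * pi * to_int_mod_ring a / CARD('p)
      + 2 * pi * to_int_mod_ring b / CARD('p) + 2 * pi * of_int (- q))"
    unfolding omega_pow_def sum_rep by (simp add: P_def field_simps)
  also have "\<dots> = omega_pow a * omega_pow b"
    by (simp only: cis_mult [symmetric] omega_pow_def cis_multiple_2pi Ints_of_int mult_1_right)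
  finally show ?thesis .
qed

lemma omega_pow_zero [simp]: "omega_pow 0 = 1"
  by (simp add: omega_pow_def)

lemma omega_pow_sum: "omega_pow (\<Sum>j\<in>S. f j) = (\<Prod>j\<in>S. omega_pow (f j))"
  by (induction S rule: infinite_finite_induct) (auto simp: omega_pow_add)

lemma cos_2pi_multiple_le:
  fixes P m :: int
  assumes "m \<noteq> 0" "\<bar>m\<bar> < P"
  shows "cos (2 * pi * m / P) \<le> cos (2 * pi / P)"
proof -
  have P: "P > 1"
    using assms by linarith
  have lower_half: "cos (2 * pi * y / P) \<le> cos (2 * pi / P)" if "1 \<le> y" "2 * y \<le> real_of_int P" for y :: real
    using that P by (intro cos_monotone_0_pi_le) (auto simp: field_simps)
  define y where "y = real_of_int \<bar>m\<bar>"
  have y: "1 \<le> y" "y + 1 \<le> P"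
    using assms unfolding y_def by auto
  have "cos (2 * pi * m / P) = cos (2 * pi * y / P)"
    unfolding y_def by (cases "m \<ge> 0") (simp_all add: minus_divide_left [symmetric])
  also have "\<dots> \<le> cos (2 * pi / P)"
  proof (cases "2 * y \<le> P")
    case True
    then show ?thesis
      using lower_half y by simp
  next
    case False
    have "cos (2 * pi * y / P) = cos (2 * pi - 2 * pi * (P - y) / P)"
      using P by (simp add: field_simps)
    also have "\<dots> = cos (2 * pi * (P - y) / P)"
      by (simp add: cos_diff)
    also have "\<dots> \<le> cos (2 * pi / P)"
      using False y by (intro lower_half) auto
    finally show ?thesis .
  qed
  finally show ?thesis .
qed

lemma Re_omega_pow_mult_cnj_le:
  fixes a b :: "'p::prime_card mod_ring"
  assumes "a \<noteq> b"
  shows "Re (omega_pow a * cnj (omega_pow b)) \<le> cos (2 * pi / CARD('p))"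
proof -
  define m where "m = to_int_mod_ring a - to_int_mod_ring b"
  have "Re (omega_pow a * cnj (omega_pow b)) = cos (2 * pi * m / CARD('p))"
    by (simp add: omega_pow_def m_def cis_cnj cis_mult diff_divide_distrib right_diff_distrib)
  also have "\<dots> \<le> cos (2 * pi / CARD('p))"
  proof -
    have range: "to_int_mod_ring x \<in> {0..<int CARD('p)}" for x :: "'p mod_ring"
      using range_to_int_mod_ring by blast
    have "m \<noteq> 0"
      using assms unfolding m_def by (metis eq_iff_diff_eq_0 of_int_mod_ring_to_int_mod_ring)
    moreover have "\<bar>m\<bar> < int CARD('p)"
      using range [of a] range [of b] unfolding m_def by (simp add: abs_less_iff)
    ultimately show ?thesis
      using cos_2pi_multiple_le [of m "int CARD('p)"] by simp
  qed
  finally show ?thesis .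
qed

definition dist_char :: "('p::prime_card mod_ring \<Rightarrow> real) \<Rightarrow> 'p mod_ring \<Rightarrow> complex" where
  "dist_char D \<sigma> = (\<Sum>a\<in>UNIV. complex_of_real (D a) * omega_pow (\<sigma> * a))"

lemma norm_dist_char_squared_le:
  fixes D :: "'p::prime_card mod_ring \<Rightarrow> real"
  assumes D: "is_distribution D" and D_le: "\<forall>a. D a \<le> 1 - c" and "\<sigma> \<noteq> 0"
  shows "(cmod (dist_char D \<sigma>))\<^sup>2 \<le> 1 - c * (1 - cos (2 * pi / CARD('p)))"
proof -
  define C where "C = cos (2 * pi / CARD('p))"
  define z where "z a = omega_pow (\<sigma> * a)" for a
  have D_nonneg: "\<And>a. 0 \<le> D a" and D_sum: "(\<Sum>a\<in>UNIV. D a) = 1"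
    using D unfolding is_distribution_def by auto
  have z_le: "Re (z a * cnj (z b)) \<le> (if a = b then 1 else C)" for a b
  proof (cases "a = b")
    case True
    then show ?thesis
      by (simp add: z_def omega_pow_def complex_mult_cnj cmod_power2 [symmetric])
  next
    case False
    then show ?thesis
      using \<open>\<sigma> \<noteq> 0\<close> Re_omega_pow_mult_cnj_le [of "\<sigma> * a" "\<sigma> * b"] by (simp add: z_def C_def)
  qed
  have "(cmod (dist_char D \<sigma>))\<^sup>2 = Re (dist_char D \<sigma> * cnj (dist_char D \<sigma>))"
    by (simp add: complex_mult_cnj cmod_power2)
  also have "\<dots> = (\<Sum>a\<in>UNIV. \<Sum>b\<in>UNIV. D a * D b * Re (z a * cnj (z b)))"
    by (simp add: dist_char_def z_def sum_distrib_left sum_distrib_right Re_sum mult_ac)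
  also have "\<dots> \<le> (\<Sum>a\<in>UNIV. \<Sum>b\<in>UNIV. D a * D b * (if a = b then 1 else C))"
    by (intro sum_mono mult_left_mono z_le) (simp add: D_nonneg)
  also have "\<dots> = C * ((\<Sum>a\<in>UNIV. D a) * (\<Sum>b\<in>UNIV. D b)) + (1 - C) * (\<Sum>a\<in>UNIV. D a * D a)"
  proof -
    have "D a * D b * (if a = b then 1 else C) = C * (D a * D b) + (if b = a then (1 - C) * (D a * D a) else 0)" for a b
      by (simp add: algebra_simps)
    then show ?thesis
      by (simp add: sum.distrib sum_product sum_distrib_left mult.commute)
  qed
  also have "\<dots> \<le> C + (1 - C) * (\<Sum>a\<in>UNIV. D a * (1 - c))"
    unfolding D_sum mult_1_right
    by (intro add_left_mono mult_left_mono sum_mono) (simp_all add: C_def D_nonneg D_le)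
  also have "\<dots> = 1 - c * (1 - C)"
    by (simp add: sum_distrib_right [symmetric] D_sum) (simp add: algebra_simps)
  finally show ?thesis
    unfolding C_def .
qed

section \<open>Hamming weights in subspaces of \<open>F\<^sup>n\<close>\<close>

definition hamming_weight :: "'a::zero ^ 'n \<Rightarrow> nat" where
  "hamming_weight v = card {j. v $ j \<noteq> 0}"

definition coord_proj :: "'n set \<Rightarrow> 'a::zero ^ 'n \<Rightarrow> 'a ^ 'n" where
  "coord_proj J v = (\<chi> j. if j \<in> J then v $ j else 0)"

lemma prod_if_eq_power_hamming_weight:
  "(\<Prod>j\<in>UNIV. if v $ j = 0 then 1 else x) = x ^ hamming_weight v"
  for v :: "'a::zero ^ 'n" and x :: "'b::comm_monoid_mult"
  by (simp add: hamming_weight_def prod.If_cases Collect_neg_eq [symmetric])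

lemma hamming_weight_coord_proj_le: "hamming_weight (coord_proj J v) \<le> hamming_weight v"
  unfolding hamming_weight_def coord_proj_def by (intro card_mono) auto

lemma hamming_weight_scale_axis_add:
  fixes w :: "'a::field ^ 'n"
  assumes "w $ j = 0"
  shows "hamming_weight (a *s axis j 1 + w) = hamming_weight w + (if a = 0 then 0 else 1)"
proof -
  have "{i. (a *s axis j 1 + w) $ i \<noteq> 0}
      = (if a = 0 then {i. w $ i \<noteq> 0} else insert j {i. w $ i \<noteq> 0})"
    using assms by (auto simp: axis_def)
  then show ?thesis
    using assms by (simp add: hamming_weight_def)
qed

lemma linear_coord_proj: "Vector_Spaces.linear (*s) (*s) (coord_proj J :: 'a::field ^ 'n \<Rightarrow> _)"
  by (simp add: Vector_Spaces.linear_iff vec.vector_space_axioms coord_proj_def vec_eq_iff)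

lemma sum_if_zero_else_const:
  "(\<Sum>a\<in>(UNIV :: 'a::{zero,finite} set). if a = 0 then 1 else u) = 1 + (real CARD('a) - 1) * u"
  by (simp add: sum.If_cases Compl_eq_Diff_UNIV card_Diff_subset algebra_simps of_nat_diff)

lemma sum_span_insert:
  fixes S :: "('a::{field,finite} ^ 'n) set"
  assumes "r \<notin> vec.span S"
  shows "(\<Sum>v\<in>vec.span (insert r S). g v) = (\<Sum>a\<in>UNIV. \<Sum>w\<in>vec.span S. g (a *s r + w))"
proof -
  let ?f = "\<lambda>(a, w). a *s r + w"
  have inj: "inj_on ?f (UNIV \<times> vec.span S)"
  proof (rule inj_onI, clarsimp)
    fix a a' w w'
    assume span: "w \<in> vec.span S" "w' \<in> vec.span S" and eq: "a *s r + w = a' *s r + w'"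
    have "a = a'"
    proof (rule ccontr)
      assume "a \<noteq> a'"
      from eq have "(a - a') *s r = w' - w"
        by (simp add: vec_eq_iff algebra_simps)
      then have "r = inverse (a - a') *s (w' - w)"
        using \<open>a \<noteq> a'\<close> by (metis vector_smult_assoc vector_smult_lid left_inverse right_minus_eq)
      then have "r \<in> vec.span S"
        using span by (simp add: vec.span_diff vec.span_scale)
      with assms show False ..
    qed
    with eq show "a = a' \<and> w = w'"
      by simp
  qed
  have img: "?f ` (UNIV \<times> vec.span S) = vec.span (insert r S)"
  proof (intro equalityI subsetI)
    fix v assume "v \<in> vec.span (insert r S)"
    then obtain a where "v - a *s r \<in> vec.span S"
      by (auto simp: vec.span_insert)
    then show "v \<in> ?f ` (UNIV \<times> vec.span S)"
      by (intro image_eqI [of _ _ "(a, v - a *s r)"]) auto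
  next
    fix v assume "v \<in> ?f ` (UNIV \<times> vec.span S)"
    then obtain a w where "v = a *s r + w" "w \<in> vec.span S"
      by auto
    then show "v \<in> vec.span (insert r S)"
      by (auto simp: vec.span_insert intro!: exI [of _ a])
  qed
  have "(\<Sum>v\<in>vec.span (insert r S). g v) = (\<Sum>x\<in>UNIV \<times> vec.span S. g (?f x))"
    unfolding img [symmetric] by (rule sum.reindex [OF inj, unfolded comp_def])
  then show ?thesis
    by (simp add: sum.cartesian_product split_def)
qed

lemma sum_power_hamming_weight_span_insert_axis:
  fixes W :: "('a::{field,finite} ^ 'n) set" and u :: real
  assumes "vec.subspace W" "\<forall>w\<in>W. w $ j = 0"
  shows "(\<Sum>v\<in>vec.span (insert (axis j 1) W). u ^ hamming_weight v)
    = (1 + (real CARD('a) - 1) * u) * (\<Sum>w\<in>W. u ^ hamming_weight w)"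
proof -
  have span_W: "vec.span W = W"
    using assms(1) by (rule vec.span_eq_iff [THEN iffD2])
  then have notin: "axis j 1 \<notin> vec.span W"
    using assms(2) by (metis axis_nth zero_neq_one)
  have "(\<Sum>v\<in>vec.span (insert (axis j 1) W). u ^ hamming_weight v)
      = (\<Sum>a\<in>UNIV. \<Sum>w\<in>W. u ^ hamming_weight (a *s axis j 1 + w))"
    by (simp only: sum_span_insert [OF notin] span_W)
  also have "\<dots> = (\<Sum>a\<in>UNIV. \<Sum>w\<in>W. (if a = (0 :: 'a) then 1 else u) * u ^ hamming_weight w)"
    using assms(2) by (intro sum.cong refl) (simp add: hamming_weight_scale_axis_add)
  also have "\<dots> = (1 + (real CARD('a) - 1) * u) * (\<Sum>w\<in>W. u ^ hamming_weight w)"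
    by (simp add: sum_product [symmetric] sum_if_zero_else_const)
  finally show ?thesis .
qed

context
  fixes V :: "('a::field ^ 'n) set" and j :: 'n and J :: "'n set"
  assumes subspace: "vec.subspace V"
    and j_notin: "j \<notin> J"
    and support: "\<forall>v\<in>V. \<forall>i. i \<notin> insert j J \<longrightarrow> v $ i = 0"
begin

lemma axis_scale_add_coord_proj: "v \<in> V \<Longrightarrow> v = v $ j *s axis j 1 + coord_proj J v"
  using j_notin support by (auto simp: vec_eq_iff axis_def coord_proj_def)

lemma span_insert_axis_coord_proj:
  assumes "axis j 1 \<in> V"
  shows "V = vec.span (insert (axis j 1) (coord_proj J ` V))"
proof
  have "coord_proj J v \<in> V" if "v \<in> V" for v
  proof -
    have "coord_proj J v = v - v $ j *s axis j 1"
      using axis_scale_add_coord_proj [OF that] by (metis add_diff_cancel_left')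
    then show ?thesis
      using assms subspace that by (simp add: vec.subspace_diff vec.subspace_scale)
  qed
  then show "vec.span (insert (axis j 1) (coord_proj J ` V)) \<subseteq> V"
    using assms subspace by (intro vec.span_minimal) auto
  show "V \<subseteq> vec.span (insert (axis j 1) (coord_proj J ` V))"
  proof
    fix v assume "v \<in> V"
    then show "v \<in> vec.span (insert (axis j 1) (coord_proj J ` V))"
      using axis_scale_add_coord_proj [OF \<open>v \<in> V\<close>]
      by (metis image_eqI insertI1 insertI2 vec.span_add vec.span_base vec.span_scale)
  qed
qed

lemma inj_on_coord_proj:
  assumes "axis j 1 \<notin> V"
  shows "inj_on (coord_proj J) V"
proof (rule inj_onI)
  fix v w assume "v \<in> V" "w \<in> V" and eq: "coord_proj J v = coord_proj J w"
  then have "v - w \<in> V"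
    using subspace by (simp add: vec.subspace_diff)
  moreover have "coord_proj J (v - w) = 0"
    by (simp add: vec.linear_diff [OF linear_coord_proj] eq)
  ultimately have diff: "v - w = (v - w) $ j *s axis j 1"
    using axis_scale_add_coord_proj by (metis add.right_neutral)
  have "(v - w) $ j = 0"
  proof (rule ccontr)
    assume "(v - w) $ j \<noteq> 0"
    then have "inverse ((v - w) $ j) *s (v - w) = axis j 1"
      by (metis diff vector_smult_assoc left_inverse vector_smult_lid)
    with \<open>v - w \<in> V\<close> assms subspace show False
      by (metis vec.subspace_scale)
  qed
  with diff show "v = w"
    by simp
qed

end

text \<open>
  Induction on a set \<open>J\<close> of coordinates carrying the support of \<open>V\<close>: adding a coordinate \<open>j\<close>,
  either \<open>e\<^sub>j \<in> V\<close> and \<open>V\<close> splits off the line through \<open>e\<^sub>j\<close>, or forgetting coordinate \<open>j\<close> is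
  injective on \<open>V\<close> and can only decrease weights.
\<close>

lemma sum_power_hamming_weight_le_supported:
  fixes V :: "('a::{field,finite} ^ 'n) set" and u :: real
  assumes "finite J" "vec.subspace V" "\<forall>v\<in>V. \<forall>i. i \<notin> J \<longrightarrow> v $ i = 0"
    and u: "0 \<le> u" "u \<le> 1"
  shows "(\<Sum>v\<in>V. u ^ hamming_weight v) \<le> (1 + (real CARD('a) - 1) * u) ^ vec.dim V"
  using assms(1-3)
proof (induction J arbitrary: V rule: finite_induct)
  case empty
  then have "V = {0}"
    using vec.subspace_0 by (auto simp: vec_eq_iff)
  then show ?case
    by (simp add: hamming_weight_def)
next
  case (insert j J)
  define B where "B = 1 + (real CARD('a) - 1) * u"
  define W where "W = coord_proj J ` V"
  have W: "vec.subspace W" "\<forall>w\<in>W. \<forall>i. i \<notin> J \<longrightarrow> w $ i = 0"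
    unfolding W_def using vec.linear_subspace_image [OF linear_coord_proj insert.prems(1)]
    by (auto simp: coord_proj_def)
  then have IH: "(\<Sum>w\<in>W. u ^ hamming_weight w) \<le> B ^ vec.dim W"
    unfolding B_def by (rule insert.IH)
  show ?case
  proof (cases "axis j 1 \<in> V")
    case True
    have V: "V = vec.span (insert (axis j 1) W)"
      unfolding W_def by (rule span_insert_axis_coord_proj [OF insert.prems(1) insert.hyps(2) insert.prems(2) True])
    have W_j: "\<forall>w\<in>W. w $ j = 0"
      using W(2) insert.hyps(2) by blast
    then have "axis j 1 \<notin> vec.span W"
      using vec.span_eq_iff [THEN iffD2, OF W(1)] by (metis axis_nth zero_neq_one)
    then have "vec.dim V = Suc (vec.dim W)"
      by (subst V) (simp add: vec.dim_insert)
    moreover have "(\<Sum>v\<in>V. u ^ hamming_weight v) = B * (\<Sum>w\<in>W. u ^ hamming_weight w)"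
      unfolding B_def by (subst V) (rule sum_power_hamming_weight_span_insert_axis [OF W(1) W_j])
    ultimately show ?thesis
      using IH u by (simp add: B_def mult_left_mono)
  next
    case False
    have inj: "inj_on (coord_proj J) V"
      by (rule inj_on_coord_proj [OF insert.prems(1) insert.hyps(2) insert.prems(2) False])
    have "(\<Sum>v\<in>V. u ^ hamming_weight v) \<le> (\<Sum>v\<in>V. u ^ hamming_weight (coord_proj J v))"
      using u by (intro sum_mono power_decreasing hamming_weight_coord_proj_le) auto
    also have "\<dots> = (\<Sum>w\<in>W. u ^ hamming_weight w)"
      unfolding W_def by (simp add: sum.reindex [OF inj])
    also have "\<dots> \<le> B ^ vec.dim W"
      by (rule IH)
    also have "vec.dim W = vec.dim V"
    proof -
      have "vec.span V = V"
        using insert.prems(1) by (rule vec.span_eq_iff [THEN iffD2])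
      with inj show ?thesis
        unfolding W_def by (intro vec.dim_image_eq [OF linear_coord_proj]) (simp only:)
    qed
    finally show ?thesis
      unfolding B_def .
  qed
qed

lemma sum_power_hamming_weight_le:
  fixes V :: "('a::{field,finite} ^ 'n) set" and u :: real
  assumes "vec.subspace V" "0 \<le> u" "u \<le> 1"
  shows "(\<Sum>v\<in>V. u ^ hamming_weight v) \<le> (1 + (real CARD('a) - 1) * u) ^ vec.dim V"
  using sum_power_hamming_weight_le_supported [of UNIV V u] assms by simp

section \<open>Linear combinations with independent random coefficients\<close>

lemma sum_PiE_insert:
  assumes "i \<notin> I"
  shows "(\<Sum>f\<in>PiE (insert i I) A. h f) = (\<Sum>a\<in>A i. \<Sum>f\<in>PiE I A. h (f(i := a)))"
proof -
  have "(\<Sum>f\<in>PiE (insert i I) A. h f) = (\<Sum>(a, f)\<in>A i \<times> PiE I A. h (f(i := a)))"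
    using assms
    by (intro sum.reindex_bij_witness [of _ "\<lambda>(a, f). f(i := a)" "\<lambda>f. (f i, f(i := undefined))"])
       (auto simp: PiE_def extensional_def)
  then show ?thesis
    by (simp add: sum.cartesian_product)
qed

lemma sum_PiE_insert_prod_lin_comb:
  fixes r :: "'i \<Rightarrow> 'a::field ^ 'n" and D :: "'a \<Rightarrow> 'b::comm_semiring_1"
  assumes "finite I" "i \<notin> I"
  shows "(\<Sum>f\<in>PiE (insert i I) (\<lambda>_. UNIV). (\<Prod>j\<in>insert i I. D (f j)) * g (\<Sum>j\<in>insert i I. f j *s r j))
    = (\<Sum>a\<in>UNIV. D a * (\<Sum>f\<in>PiE I (\<lambda>_. UNIV). (\<Prod>j\<in>I. D (f j)) * g (a *s r i + (\<Sum>j\<in>I. f j *s r j))))"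
proof -
  have "(\<Prod>j\<in>I. D ((f(i := a)) j)) = (\<Prod>j\<in>I. D (f j))"
    and "(\<Sum>j\<in>I. (f(i := a)) j *s r j) = (\<Sum>j\<in>I. f j *s r j)" for f a
    using assms(2) by (auto intro!: prod.cong sum.cong)
  then show ?thesis
    using assms by (simp add: sum_PiE_insert sum_distrib_left mult.assoc)
qed

lemma sum_span_translate:
  fixes S :: "('a::{field,finite} ^ 'n) set"
  assumes "x \<in> vec.span S"
  shows "(\<Sum>w\<in>vec.span S. g (x + w)) = (\<Sum>v\<in>vec.span S. g v)"
  using assms
  by (intro sum.reindex_bij_witness [of _ "\<lambda>v. v - x" "\<lambda>w. x + w"]) (auto simp: vec.span_add vec.span_diff)

text \<open>
  When a new vector \<open>r i\<close> enlarges the span, its coefficient \<open>f i\<close> is determined by the value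
  of the combination, which costs a factor \<open>max D \<le> 1 - c\<close>.
\<close>

lemma sum_PiE_lin_comb_le:
  fixes r :: "'i \<Rightarrow> 'a::{field,finite} ^ 'n" and D :: "'a \<Rightarrow> real" and g :: "'a ^ 'n \<Rightarrow> real"
  assumes "finite I" and D_nonneg: "\<And>a. 0 \<le> D a" and D_sum: "(\<Sum>a\<in>UNIV. D a) = 1"
    and D_le: "\<And>a. D a \<le> 1 - c" and "\<And>v. 0 \<le> g v"
  shows "(\<Sum>f\<in>PiE I (\<lambda>_. UNIV). (\<Prod>i\<in>I. D (f i)) * g (\<Sum>i\<in>I. f i *s r i))
    \<le> (1 - c) ^ vec.dim (r ` I) * (\<Sum>v\<in>vec.span (r ` I). g v)"
  using assms(1,5)
proof (induction I arbitrary: g rule: finite_induct)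
  case empty
  then show ?case
    by simp
next
  case (insert i I)
  define d where "d = vec.dim (r ` I)"
  define X where "X a = (\<Sum>w\<in>vec.span (r ` I). g (a *s r i + w))" for a
  have "(\<Sum>f\<in>PiE (insert i I) (\<lambda>_. UNIV). (\<Prod>j\<in>insert i I. D (f j)) * g (\<Sum>j\<in>insert i I. f j *s r j))
      \<le> (\<Sum>a\<in>UNIV. D a * ((1 - c) ^ d * X a))"
    unfolding sum_PiE_insert_prod_lin_comb [OF insert.hyps] d_def X_def using insert.prems
    by (intro sum_mono mult_left_mono D_nonneg insert.IH [of "\<lambda>v. g (_ *s r i + v)"])
  also have "\<dots> = (1 - c) ^ d * (\<Sum>a\<in>UNIV. D a * X a)"
    by (simp add: sum_distrib_left mult_ac)
  finally have step: "(\<Sum>f\<in>PiE (insert i I) (\<lambda>_. UNIV). (\<Prod>j\<in>insert i I. D (f j)) * g (\<Sum>j\<in>insert i I. f j *s r j))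
      \<le> (1 - c) ^ d * (\<Sum>a\<in>UNIV. D a * X a)" .
  show ?case
  proof (cases "r i \<in> vec.span (r ` I)")
    case True
    then have "X a = (\<Sum>v\<in>vec.span (r ` I). g v)" for a
      unfolding X_def by (intro sum_span_translate vec.span_scale)
    moreover have "vec.span (r ` insert i I) = vec.span (r ` I)" "vec.dim (r ` insert i I) = d"
      using True by (simp_all add: vec.span_redundant vec.dim_insert d_def)
    ultimately show ?thesis
      using step by (simp add: sum_distrib_right [symmetric] D_sum)
  next
    case False
    have "(\<Sum>a\<in>UNIV. D a * X a) \<le> (\<Sum>a\<in>UNIV. (1 - c) * X a)"
      unfolding X_def using insert.prems by (intro sum_mono mult_right_mono D_le sum_nonneg)
    also have "\<dots> = (1 - c) * (\<Sum>v\<in>vec.span (r ` insert i I). g v)"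
      using False by (simp add: sum_span_insert X_def sum_distrib_left)
    finally have "(1 - c) ^ d * (\<Sum>a\<in>UNIV. D a * X a)
        \<le> (1 - c) ^ d * ((1 - c) * (\<Sum>v\<in>vec.span (r ` insert i I). g v))"
      by (rule mult_left_mono) (use order_trans [OF D_nonneg D_le] in simp)
    also have "\<dots> = (1 - c) ^ vec.dim (r ` insert i I) * (\<Sum>v\<in>vec.span (r ` insert i I). g v)"
      using False by (simp only: image_insert vec.dim_insert d_def if_False Suc_eq_plus1 [symmetric] power_Suc mult.left_commute)
    finally show ?thesis
      by (rule order_trans [OF step])
  qed
qed

lemma sum_vec_nth:
  fixes h :: "('n::finite \<Rightarrow> 'a) \<Rightarrow> 'b::comm_monoid_add"
  shows "(\<Sum>x\<in>UNIV. h (vec_nth x)) = (\<Sum>f\<in>UNIV. h f)"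
  by (rule sum.reindex_bij_witness [of _ vec_lambda vec_nth]) auto

lemma sum_vec_prod:
  fixes g :: "'n::finite \<Rightarrow> 'a::finite \<Rightarrow> 'b::comm_semiring_1"
  shows "(\<Sum>y\<in>UNIV. \<Prod>j\<in>UNIV. g j (y $ j)) = (\<Prod>j\<in>UNIV. \<Sum>a\<in>UNIV. g j a)"
  using sum_vec_nth [of "\<lambda>f. \<Prod>j\<in>UNIV. g j (f j)"] prod_sum_PiE [of UNIV "\<lambda>_. UNIV" g]
  by (simp add: PiE_UNIV_domain)

lemma expectation_power_hamming_weight_le:
  fixes A :: "'a::{field,finite} ^ 'n ^ 'm" and D :: "'a \<Rightarrow> real" and u :: real
  assumes D_nonneg: "\<And>a. 0 \<le> D a" and D_sum: "(\<Sum>a\<in>UNIV. D a) = 1"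
    and D_le: "\<And>a. D a \<le> 1 - c" and u: "0 \<le> u" "u \<le> 1"
  shows "(\<Sum>x\<in>UNIV. (\<Prod>i\<in>UNIV. D (x $ i)) * u ^ hamming_weight (x v* A))
    \<le> ((1 - c) * (1 + (real CARD('a) - 1) * u)) ^ rank A"
proof -
  have rows: "(\<lambda>i. A $ i) ` UNIV = rows A"
    by (auto simp: rows_def row_def vec_lambda_eta)
  have "x v* A = (\<Sum>i\<in>UNIV. x $ i *s A $ i)" for x
    by (simp add: vector_matrix_mult_def vec_eq_iff sum_component mult.commute)
  then have "(\<Sum>x\<in>UNIV. (\<Prod>i\<in>UNIV. D (x $ i)) * u ^ hamming_weight (x v* A))
      = (\<Sum>f\<in>PiE UNIV (\<lambda>_. UNIV). (\<Prod>i\<in>UNIV. D (f i)) * u ^ hamming_weight (\<Sum>i\<in>UNIV. f i *s A $ i))"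
    using sum_vec_nth [of "\<lambda>f. (\<Prod>i\<in>UNIV. D (f i)) * u ^ hamming_weight (\<Sum>i\<in>UNIV. f i *s A $ i)"]
    by (simp add: PiE_UNIV_domain)
  also have "\<dots> \<le> (1 - c) ^ rank A * (\<Sum>v\<in>vec.span (rows A). u ^ hamming_weight v)"
    using sum_PiE_lin_comb_le [OF finite_class.finite_UNIV D_nonneg D_sum D_le,
        of "\<lambda>v. u ^ hamming_weight v" "\<lambda>i. A $ i"] u
    by (simp add: rows row_rank_def_gen)
  also have "\<dots> \<le> (1 - c) ^ rank A * (1 + (real CARD('a) - 1) * u) ^ rank A"
    using sum_power_hamming_weight_le [OF vec.subspace_span u, of "rows A"] order_trans [OF D_nonneg D_le]
    by (intro mult_left_mono) (auto simp: row_rank_def_gen)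
  finally show ?thesis
    by (simp add: power_mult_distrib)
qed

section \<open>Numerical estimates\<close>

lemma weighted_mean_le_power_mean:
  fixes w f :: "'i \<Rightarrow> real"
  assumes "finite X" "\<And>x. x \<in> X \<Longrightarrow> 0 \<le> w x" "(\<Sum>x\<in>X. w x) = 1"
    and "\<And>x. x \<in> X \<Longrightarrow> 0 < f x" "1 \<le> s"
  shows "(\<Sum>x\<in>X. w x * f x) \<le> (\<Sum>x\<in>X. w x * f x powr s) powr (1 / s)"
proof -
  have "X \<noteq> {}"
    using assms(3) by auto
  then have "(\<Sum>x\<in>X. w x * f x) powr s \<le> (\<Sum>x\<in>X. w x * f x powr s)"
    using convex_on_sum [OF assms(1) _ powr_convex [OF assms(5)] assms(3)] assms(2,4) by simp
  moreover have "0 \<le> (\<Sum>x\<in>X. w x * f x)"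
    using assms(2,4) by (intro sum_nonneg) (simp add: less_imp_le)
  ultimately show ?thesis
    using assms(5) powr_mono2 [of "1 / s" "(\<Sum>x\<in>X. w x * f x) powr s"] by (simp add: powr_powr)
qed

lemma power_powr_commute: "0 < x \<Longrightarrow> (x ^ n) powr s = (x powr s) ^ n"
  for x s :: real
  by (simp add: powr_realpow [symmetric] powr_powr mult.commute)

lemma one_minus_cos_2pi_div_ge:
  fixes P :: real
  assumes "3 \<le> P"
  shows "5 * pi\<^sup>2 / (4 * P\<^sup>2) \<le> 1 - cos (2 * pi / P)"
proof -
  define y where "y = pi / P"
  have y: "0 \<le> y" "y \<le> pi / 3"
    using assms divide_left_mono [of 3 P pi] by (auto simp: y_def)
  have "\<bar>sin y - y\<bar> \<le> y ^ 3 / 6"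
    using Maclaurin_sin_bound [of y 3] y by (simp add: sin_coeff_def numeral_3_eq_3 fact_numeral)
  then have "y - y ^ 3 / 6 \<le> sin y"
    by linarith
  then have sin_ge: "y * (1 - y\<^sup>2 / 6) \<le> sin y"
    by (simp add: right_diff_distrib power2_eq_square power3_eq_cube)
  have "pi \<le> 31416 / 10000"
    using pi_approx by simp
  then have "pi * pi \<le> (31416 / 10000) * (31416 / 10000)"
    by (intro mult_mono) simp_all
  then have "pi\<^sup>2 \<le> 987 / 100"
    by (simp add: power2_eq_square)
  moreover have "y\<^sup>2 \<le> (pi / 3)\<^sup>2"
    using y by (intro power_mono) auto
  ultimately have "817 / 1000 \<le> 1 - y\<^sup>2 / 6"
    by (simp add: power_divide)
  then have "817 / 1000 * y \<le> sin y"
    using sin_ge y(1) by (smt (verit) mult_right_mono mult.commute)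
  then have "(817 / 1000 * y)\<^sup>2 \<le> (sin y)\<^sup>2"
    by (rule power_mono) (use y(1) in simp)
  moreover have "(817 / 1000 * y)\<^sup>2 = 667489 / 1000000 * y\<^sup>2"
    by (simp add: power2_eq_square)
  ultimately have "667 / 1000 * y\<^sup>2 \<le> (sin y)\<^sup>2"
    using zero_le_power2 [of y] by linarith
  moreover have "1 - cos (2 * pi / P) = 2 * (sin y)\<^sup>2"
    using cos_double_sin [of y] by (simp add: y_def)
  moreover have "5 * pi\<^sup>2 / (4 * P\<^sup>2) = 5 / 4 * y\<^sup>2"
    by (simp add: y_def power_divide)
  ultimately show ?thesis
    using zero_le_power2 [of y] by linarith
qed

lemma one_minus_cos_2pi_div_le:
  fixes P :: real
  assumes "3 \<le> P"
  shows "1 - cos (2 * pi / P) \<le> 3 / 2"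
proof -
  have "cos (2 * pi / 3) \<le> cos (2 * pi / P)"
    using assms divide_left_mono [of 3 P "2 * pi"] by (intro cos_monotone_0_pi_le) auto
  then show ?thesis
    using cos_120 by simp
qed

lemma neg_ln_sqrt_one_minus_bounds:
  fixes a :: real
  assumes "0 < a" "a \<le> 3 / 4"
  shows "a / 2 \<le> - ln (sqrt (1 - a))" and "- ln (sqrt (1 - a)) \<le> ln 2"
proof -
  have ln_sqrt: "ln (sqrt (1 - a)) = ln (1 - a) / 2"
    using assms by (simp add: ln_sqrt)
  show "a / 2 \<le> - ln (sqrt (1 - a))"
    using ln_le_minus_one [of "1 - a"] assms by (simp add: ln_sqrt)
  have "ln (1 / 4) \<le> ln (1 - a)"
    using assms by simp
  then show "- ln (sqrt (1 - a)) \<le> ln 2"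
    by (simp add: ln_sqrt ln_div ln_realpow [of 2 2, simplified])
qed

lemma sqrt_one_minus_cos_2pi_div_bounds:
  fixes P c :: real
  assumes P: "3 \<le> P" and c: "0 < c" "c \<le> 1 / 2"
  defines "\<rho> \<equiv> sqrt (1 - c * (1 - cos (2 * pi / P)))"
  shows "0 < \<rho>" "\<rho> \<le> 1" "5 * pi\<^sup>2 * c / (8 * P\<^sup>2) \<le> - ln \<rho>" "- ln \<rho> \<le> ln 2"
proof -
  define a where "a = c * (1 - cos (2 * pi / P))"
  have "c * (5 * pi\<^sup>2 / (4 * P\<^sup>2)) \<le> a"
    unfolding a_def using c by (intro mult_left_mono one_minus_cos_2pi_div_ge [OF P]) simp
  moreover have "a \<le> 1 / 2 * (3 / 2)"
    using one_minus_cos_2pi_div_le [OF P] one_minus_cos_2pi_div_ge [OF P] c unfolding a_def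
    by (intro mult_mono) auto
  moreover have "0 < c * (5 * pi\<^sup>2 / (4 * P\<^sup>2))"
    using c P by simp
  ultimately have a: "0 < a" "a \<le> 3 / 4" "5 * pi\<^sup>2 * c / (8 * P\<^sup>2) \<le> a / 2"
    by auto
  then show "0 < \<rho>" "\<rho> \<le> 1"
    by (simp_all add: \<rho>_def a_def [symmetric])
  have "\<rho> = sqrt (1 - a)"
    by (simp add: \<rho>_def a_def)
  then have "a / 2 \<le> - ln \<rho>" "- ln \<rho> \<le> ln 2"
    using neg_ln_sqrt_one_minus_bounds [OF a(1,2)] by simp_all
  then show "5 * pi\<^sup>2 * c / (8 * P\<^sup>2) \<le> - ln \<rho>" "- ln \<rho> \<le> ln 2"
    using a(3) by linarith+
qed

lemma ln_five_mul_bounds: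
  fixes P c :: real
  assumes P: "3 \<le> P" and c: "0 < c" "c \<le> 1 / 2"
  shows "ln 2 \<le> ln (5 * (P - 1) / c)" "ln (5 * (P - 1) / c) \<le> ln (2 * exp 1 * P / c)"
proof -
  have "10 / c \<le> 5 * (P - 1) / c"
    using P c by (auto intro!: divide_right_mono)
  moreover have "20 \<le> 10 / c"
    using c by (simp add: field_simps)
  ultimately show "ln 2 \<le> ln (5 * (P - 1) / c)"
    by simp
  have "5 \<le> 2 * exp (1 :: real)"
    using exp_lower_Taylor_quadratic [of 1] by simp
  then have "5 * P \<le> 2 * exp 1 * P"
    using P by (intro mult_right_mono) auto
  then have "5 * (P - 1) / c \<le> 2 * exp 1 * P / c"
    using c by (intro divide_right_mono) auto
  then show "ln (5 * (P - 1) / c) \<le> ln (2 * exp 1 * P / c)"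
    using P c by simp
qed

text \<open>
  \<open>s\<close> is chosen so that \<open>exp (- l) powr s = c / (5 (P - 1))\<close>, which turns the base into
  \<open>(1 - c)(1 + c/5) \<le> exp (- 4c/5)\<close>.
\<close>

lemma powr_exponent_choice:
  fixes P c l :: real and k :: nat
  assumes P: "3 \<le> P" and c: "0 < c" "c \<le> 1 / 2" and l: "0 < l" "l \<le> ln 2"
  defines "M \<equiv> 5 * (P - 1) / c"
  defines "s \<equiv> ln M / l"
  shows "1 \<le> s"
    and "(((1 - c) * (1 + (P - 1) * exp (- l) powr s)) ^ k) powr (1 / s)
      \<le> exp (- (4 * c * l * k) / (5 * ln M))"
proof -
  have "ln 2 \<le> ln M"
    using ln_five_mul_bounds(1) [OF P c] by (simp add: M_def)
  then show s: "1 \<le> s"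
    using l by (simp add: s_def)
  have "exp (- l) powr s = exp (- ln M)"
    using l by (simp add: powr_def s_def)
  also have "\<dots> = c / (5 * (P - 1))"
    using P c by (simp add: exp_minus M_def)
  finally have "(P - 1) * exp (- l) powr s = c / 5"
    using P by (simp add: divide_simps algebra_simps)
  then have "(1 - c) * (1 + (P - 1) * exp (- l) powr s) = (1 - c) * (1 + c / 5)"
    by simp
  also have "\<dots> \<le> exp (- c) * exp (c / 5)"
    using c exp_ge_add_one_self [of "- c"] exp_ge_add_one_self [of "c / 5"] by (intro mult_mono) auto
  also have "\<dots> = exp (- (4 * c / 5))"
    by (simp flip: exp_add)
  finally have base: "(1 - c) * (1 + (P - 1) * exp (- l) powr s) \<le> exp (- (4 * c / 5))" .
  have "(((1 - c) * (1 + (P - 1) * exp (- l) powr s)) ^ k) powr (1 / s)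
      \<le> (exp (- (4 * c / 5)) ^ k) powr (1 / s)"
    using base c s P by (intro powr_mono2 power_mono) auto
  also have "\<dots> = exp (- (4 * c * l * k) / (5 * ln M))"
    using l by (simp add: exp_of_nat_mult [symmetric] powr_def s_def mult_ac)
  finally show "(((1 - c) * (1 + (P - 1) * exp (- l) powr s)) ^ k) powr (1 / s)
      \<le> exp (- (4 * c * l * k) / (5 * ln M))" .
qed

lemma exists_exponent_bound:
  fixes P c1 c2 \<rho> :: real and k :: nat
  assumes P: "3 \<le> P" and c1: "0 < c1" "c1 \<le> 1 / 2" and c2: "0 < c2"
    and \<rho>: "0 < \<rho>" "5 * pi\<^sup>2 * c2 / (8 * P\<^sup>2) \<le> - ln \<rho>" "- ln \<rho> \<le> ln 2"
  shows "\<exists>s\<ge>1. (((1 - c1) * (1 + (P - 1) * \<rho> powr s)) ^ k) powr (1 / s)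
      \<le> exp (- (c1 * c2 * pi\<^sup>2 * k) / (2 * P\<^sup>2 * ln (2 * exp 1 * P / c1)))"
proof -
  define l where "l = - ln \<rho>"
  define M where "M = 5 * (P - 1) / c1"
  define s where "s = ln M / l"
  define L where "L = ln (2 * exp 1 * P / c1)"
  have "0 < 5 * pi\<^sup>2 * c2 / (8 * P\<^sup>2)"
    using c2 P by simp
  then have l: "5 * pi\<^sup>2 * c2 / (8 * P\<^sup>2) \<le> l" "l \<le> ln 2" "0 < l"
    using \<rho> unfolding l_def by linarith+
  have "0 < ln (2 :: real)"
    by simp
  then have M: "0 < ln M" "ln M \<le> L"
    using ln_five_mul_bounds [OF P c1] unfolding M_def L_def by linarith+
  have "(c1 * c2 * pi\<^sup>2 * k) / (2 * P\<^sup>2 * L) = 4 * c1 * (5 * pi\<^sup>2 * c2 / (8 * P\<^sup>2)) * k / (5 * L)"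
    using P by (simp add: field_simps)
  also have "\<dots> \<le> 4 * c1 * l * k / (5 * L)"
    using l c1 M by (intro divide_right_mono mult_right_mono mult_left_mono) auto
  also have "\<dots> \<le> 4 * c1 * l * k / (5 * ln M)"
    using c1 l M by (intro divide_left_mono) auto
  finally have "exp (- (4 * c1 * l * k) / (5 * ln M)) \<le> exp (- (c1 * c2 * pi\<^sup>2 * k) / (2 * P\<^sup>2 * L))"
    by simp
  moreover have "1 \<le> s"
    "(((1 - c1) * (1 + (P - 1) * \<rho> powr s)) ^ k) powr (1 / s) \<le> exp (- (4 * c1 * l * k) / (5 * ln M))"
    using powr_exponent_choice(1) [OF P c1 l(3,2)] powr_exponent_choice(2) [OF P c1 l(3,2), of k] \<rho>(1)
    by (simp_all add: l_def M_def s_def)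
  ultimately show ?thesis
    unfolding L_def by (meson order_trans)
qed

section \<open>The bias of a bilinear form\<close>

lemma bilin_form_eq_vector_matrix_mult:
  "bilin_form A x y = (\<Sum>j\<in>UNIV. (x v* A) $ j * y $ j)"
  unfolding bilin_form_def vector_matrix_mult_def
  by (subst sum.swap) (simp add: sum_distrib_left sum_distrib_right mult_ac)

lemma bias_bilin_form_eq:
  "bias t D1 D2 (bilin_form A)
    = (\<Sum>x\<in>UNIV. complex_of_real (prod_dist D1 x) * (\<Prod>j\<in>UNIV. dist_char D2 (t * (x v* A) $ j)))"
proof -
  have "(\<Sum>y\<in>UNIV. complex_of_real (prod_dist D2 y) * omega_pow (t * bilin_form A x y))
      = (\<Prod>j\<in>UNIV. dist_char D2 (t * (x v* A) $ j))" for x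
  proof -
    have "(\<Sum>y\<in>UNIV. complex_of_real (prod_dist D2 y) * omega_pow (t * bilin_form A x y))
        = (\<Sum>y\<in>UNIV. \<Prod>j\<in>UNIV. complex_of_real (D2 (y $ j)) * omega_pow (t * (x v* A) $ j * y $ j))"
      by (simp add: bilin_form_eq_vector_matrix_mult prod_dist_def sum_distrib_left omega_pow_sum
          prod.distrib mult.assoc)
    also have "\<dots> = (\<Prod>j\<in>UNIV. \<Sum>a\<in>UNIV. complex_of_real (D2 a) * omega_pow (t * (x v* A) $ j * a))"
      by (rule sum_vec_prod)
    finally show ?thesis
      by (simp add: dist_char_def)
  qed
  then show ?thesis
    unfolding bias_def by (simp add: sum_distrib_left [symmetric] mult.assoc)
qed

lemma norm_bias_bilin_form_le:
  fixes D1 D2 :: "'p::prime_card mod_ring \<Rightarrow> real" and A :: "'p mod_ring ^ 'n2 ^ 'n1"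
  assumes D1: "is_distribution D1" and D2: "is_distribution D2"
    and D2_le: "\<forall>a. D2 a \<le> 1 - c" and "t \<noteq> 0"
  shows "cmod (bias t D1 D2 (bilin_form A))
    \<le> (\<Sum>x\<in>UNIV. prod_dist D1 x * sqrt (1 - c * (1 - cos (2 * pi / CARD('p)))) ^ hamming_weight (x v* A))"
proof -
  define \<rho> where "\<rho> = sqrt (1 - c * (1 - cos (2 * pi / CARD('p))))"
  have char_le: "cmod (dist_char D2 (t * v $ j)) \<le> (if v $ j = 0 then 1 else \<rho>)"
    for v :: "'p mod_ring ^ 'n2" and j
  proof (cases "v $ j = 0")
    case True
    then show ?thesis
      using D2 by (simp add: dist_char_def is_distribution_def flip: of_real_sum)
  next
    case False
    then show ?thesis
      using norm_dist_char_squared_le [OF D2 D2_le] \<open>t \<noteq> 0\<close> by (simp add: \<rho>_def real_le_rsqrt)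
  qed
  have prod_dist_nonneg: "0 \<le> prod_dist D1 x" for x
    using D1 by (simp add: prod_dist_def is_distribution_def prod_nonneg)
  have "cmod (bias t D1 D2 (bilin_form A))
      \<le> (\<Sum>x\<in>UNIV. prod_dist D1 x * (\<Prod>j\<in>UNIV. cmod (dist_char D2 (t * (x v* A) $ j))))"
    unfolding bias_bilin_form_eq
    by (rule order_trans [OF norm_sum]) (simp add: norm_mult prod_norm prod_dist_nonneg)
  also have "\<dots> \<le> (\<Sum>x\<in>UNIV. prod_dist D1 x * (\<Prod>j\<in>UNIV. if (x v* A) $ j = 0 then 1 else \<rho>))"
    by (intro sum_mono mult_left_mono prod_mono conjI char_le prod_dist_nonneg norm_ge_zero)
  finally show ?thesis
    by (simp add: prod_if_eq_power_hamming_weight \<rho>_def)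
qed

lemma norm_bias_bilin_form_le_powr:
  fixes D1 D2 :: "'p::prime_card mod_ring \<Rightarrow> real" and A :: "'p mod_ring ^ 'n2 ^ 'n1"
  assumes D1: "is_distribution D1" "\<forall>a. D1 a \<le> 1 - c1"
    and D2: "is_distribution D2" "\<forall>a. D2 a \<le> 1 - c2"
    and "t \<noteq> 0" "3 \<le> CARD('p)" "0 < c2" "c2 \<le> 1 / 2" "1 \<le> s"
  defines "\<rho> \<equiv> sqrt (1 - c2 * (1 - cos (2 * pi / CARD('p))))"
  shows "cmod (bias t D1 D2 (bilin_form A))
    \<le> (((1 - c1) * (1 + (real CARD('p) - 1) * \<rho> powr s)) ^ rank A) powr (1 / s)"
proof -
  define W where "W x = hamming_weight (x v* A)" for x :: "'p mod_ring ^ 'n1"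
  have \<rho>: "0 < \<rho>" "\<rho> \<le> 1"
    using sqrt_one_minus_cos_2pi_div_bounds(1,2) [of "real CARD('p)" c2] assms(6-8) by (simp_all add: \<rho>_def)
  have D1_dist: "\<And>a. 0 \<le> D1 a" "(\<Sum>a\<in>UNIV. D1 a) = 1"
    using D1(1) by (simp_all add: is_distribution_def)
  then have weights: "\<And>x. 0 \<le> prod_dist D1 x" "(\<Sum>x\<in>UNIV. prod_dist D1 x) = 1"
    by (simp_all add: prod_dist_def prod_nonneg sum_vec_prod [of "\<lambda>_. D1"])
  have "cmod (bias t D1 D2 (bilin_form A)) \<le> (\<Sum>x\<in>UNIV. prod_dist D1 x * \<rho> ^ W x)"
    using norm_bias_bilin_form_le [OF D1(1) D2 \<open>t \<noteq> 0\<close>] by (simp add: \<rho>_def W_def)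
  also have "\<dots> \<le> (\<Sum>x\<in>UNIV. prod_dist D1 x * (\<rho> ^ W x) powr s) powr (1 / s)"
    using weights \<rho>(1) \<open>1 \<le> s\<close> by (intro weighted_mean_le_power_mean) auto
  also have "\<dots> \<le> (((1 - c1) * (1 + (real CARD('p) - 1) * \<rho> powr s)) ^ rank A) powr (1 / s)"
    using expectation_power_hamming_weight_le [OF D1_dist, of c1 "\<rho> powr s" A] D1(2) \<rho> \<open>1 \<le> s\<close> weights
    by (intro powr_mono2 sum_nonneg mult_nonneg_nonneg)
       (auto simp: power_powr_commute prod_dist_def W_def powr_le1)
  finally show ?thesis .
qed

theorem proposition2p3:
  fixes D1 D2 :: "'p::prime_card mod_ring \<Rightarrow> real"
    and c1 c2 :: real
    and A :: "'p mod_ring ^ 'n2::finite ^ 'n1::finite"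
    and k :: nat
    and t :: "'p mod_ring"
  assumes "CARD('p) \<ge> 3"
    and "0 < c1" "c1 \<le> 1/2" "0 < c2" "c2 \<le> 1/2"
    and "is_distribution D1" "is_distribution D2"
    and "\<forall>a. D1 a \<le> 1 - c1" "\<forall>a. D2 a \<le> 1 - c2"
    and "rank A = k"
    and "t \<noteq> 0"
  shows "cmod (bias t D1 D2 (bilin_form A)) \<le>
    3 * exp (- (c1 * c2 * pi^2 * real k) /
      (2 * real CARD('p)^2 * ln (2 * exp 1 * real CARD('p) / c1)))"
proof -
  define P where "P = real CARD('p)"
  define \<rho> where "\<rho> = sqrt (1 - c2 * (1 - cos (2 * pi / P)))"
  have P: "3 \<le> P"
    using assms(1) by (simp add: P_def)
  note \<rho>_bounds = sqrt_one_minus_cos_2pi_div_bounds [OF P assms(4,5), folded \<rho>_def]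
  obtain s where "1 \<le> s" and bound: "(((1 - c1) * (1 + (P - 1) * \<rho> powr s)) ^ k) powr (1 / s)
      \<le> exp (- (c1 * c2 * pi\<^sup>2 * k) / (2 * P\<^sup>2 * ln (2 * exp 1 * P / c1)))"
    using exists_exponent_bound [OF P assms(2-4) \<rho>_bounds(1,3,4)] by blast
  have "cmod (bias t D1 D2 (bilin_form A)) \<le> (((1 - c1) * (1 + (P - 1) * \<rho> powr s)) ^ k) powr (1 / s)"
    using norm_bias_bilin_form_le_powr [where A = A, OF assms(6,8,7,9,11,1,4,5) \<open>1 \<le> s\<close>]
    by (simp add: assms(10) P_def \<rho>_def)
  also note bound
  also have "exp (- (c1 * c2 * pi\<^sup>2 * k) / (2 * P\<^sup>2 * ln (2 * exp 1 * P / c1)))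
      \<le> 3 * exp (- (c1 * c2 * pi\<^sup>2 * k) / (2 * P\<^sup>2 * ln (2 * exp 1 * P / c1)))"
    by simp
  finally show ?thesis
    by (simp add: P_def)
qed

end
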